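(* Let $(\mathfrak g,D)$ be a difference Lie algebra. Set $C^1(\mathfrak g,D)=\mathrm{Hom}(\mathfrak g,\mathfrak g)$ and $C^n(\mathfrak g,D)=\mathrm{Hom}(\wedge^n\mathfrak g,\mathfrak g)\oplus\mathrm{Hom}(\wedge^{n-1}\mathfrak g,\mathfrak g)$ for $n\ge2$, and define $\bar\delta:C^n(\mathfrak g,D)\to C^{n+1}(\mathfrak g,D)$ by $\bar\delta(f,\theta)=(d^{CE}_{\mathrm{ad}}f,\ d^{CE}_{\mathrm{ad}_D}\theta+T(f))$ (for $n=1$, $\bar\delta(f)=(d^{CE}_{\mathrm{ad}}f,T(f))$). Then $\bar\delta\circ\bar\delta=0$.
   Context: A difference Lie algebra $(\mathfrak g,D)$ is a Lie algebra $\mathfrak g$ with a linear map $D:\mathfrak g\to\mathfrak g$ such that $D[x,y]=[x,D(y)]-[y,D(x)]+[D(x),D(y)]$ for all $x,y$. $d^{CE}_{\mathrm{ad}}$ is the Chevalley–Eilenberg differential of $\mathfrak g$ with coefficients in the adjoint representation, and $d^{CE}_{\mathrm{ad}_D}$ the one with coefficients in the representation $\mathrm{ad}_D(x)u=[x,u]+[D(x),u]$. For $f\in\mathrm{Hom}(\wedge^n\mathfrak g,\mathfrak g)$, $T(f)\in\mathrm{Hom}(\wedge^n\mathfrak g,\mathfrak g)$ is $T(f)(x_1,\dots,x_n)=(-1)^n\big(\sum_{k=1}^n\sum_{1\le i_1<\cdots<i_k\le n}f(y_1,\dots,y_n)-D(f(x_1,\dots,x_n))\big)$, where $y_j=D(x_j)$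 if $j\in\{i_1,\dots,i_k\}$ and $y_j=x_j$ otherwise. *)

theory Defs
  imports Main "HOL.Vector_Spaces"
begin

definition lie_algebra :: "('k::field \<Rightarrow> 'g::ab_group_add \<Rightarrow> 'g) \<Rightarrow> ('g \<Rightarrow> 'g \<Rightarrow> 'g) \<Rightarrow> bool" where
  "lie_algebra scale br \<longleftrightarrow>
     vector_space scale \<and>
     (\<forall>x. Vector_Spaces.linear scale scale (br x)) \<and>
     (\<forall>y. Vector_Spaces.linear scale scale (\<lambda>x. br x y)) \<and>
     (\<forall>x. br x x = 0) \<and>
     (\<forall>x y z. br x (br y z) + br y (br z x) + br z (br x y) = 0)"

definition difference_lie_algebra ::
  "('k::field \<Rightarrow> 'g::ab_group_add \<Rightarrow> 'g) \<Rightarrow> ('g \<Rightarrow> 'g \<Rightarrow> 'g) \<Rightarrow> ('g \<Rightarrow> 'g) \<Rightarrow> bool" where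
  "difference_lie_algebra scale br D \<longleftrightarrow>
     lie_algebra scale br \<and> Vector_Spaces.linear scale scale D \<and>
     (\<forall>x y. D (br x y) = br x (D y) - br y (D x) + br (D x) (D y))"

text \<open>n-cochains: elements of Hom(wedge^n g, g), represented as functions on lists,
 only their values on lists of length n being relevant: alternating n-linear maps.\<close>

definition alt_multilinear :: "('k::field \<Rightarrow> 'g::ab_group_add \<Rightarrow> 'g) \<Rightarrow> nat \<Rightarrow> ('g list \<Rightarrow> 'g) \<Rightarrow> bool" where
  "alt_multilinear scale n f \<longleftrightarrow>
     (\<forall>xs i. length xs = n \<and> i < n \<longrightarrow> Vector_Spaces.linear scale scale (\<lambda>a. f (xs[i := a]))) \<and>
     (\<forall>xs i j. length xs = n \<and> i < j \<and> j < n \<and> xs ! i = xs ! j \<longrightarrow> f xs = 0)"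

definition del_nth :: "nat \<Rightarrow> 'a list \<Rightarrow> 'a list" where
  "del_nth i xs = take i xs @ drop (Suc i) xs"

text \<open>Chevalley--Eilenberg differential with coefficients in a representation rho
 (indices 0-based, so the usual signs (-1)^(i+1), (-1)^(i+j) become (-1)^i, (-1)^(i+j)).\<close>

definition ce_diff :: "('k::field \<Rightarrow> 'g::ab_group_add \<Rightarrow> 'g) \<Rightarrow> ('g \<Rightarrow> 'g \<Rightarrow> 'g) \<Rightarrow> ('g \<Rightarrow> 'g \<Rightarrow> 'g)
    \<Rightarrow> ('g list \<Rightarrow> 'g) \<Rightarrow> 'g list \<Rightarrow> 'g" where
  "ce_diff scale br rho f xs =
     (\<Sum>i<length xs. scale ((-1) ^ i) (rho (xs ! i) (f (del_nth i xs))))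
   + (\<Sum>i<length xs. \<Sum>j\<in>{Suc i..<length xs}.
        scale ((-1) ^ (i + j)) (f (br (xs ! i) (xs ! j) # del_nth i (del_nth j xs))))"

definition ad :: "('g \<Rightarrow> 'g \<Rightarrow> 'g) \<Rightarrow> 'g \<Rightarrow> 'g \<Rightarrow> 'g" where
  "ad br x u = br x u"

definition ad_D :: "('g \<Rightarrow> 'g \<Rightarrow> 'g) \<Rightarrow> ('g \<Rightarrow> 'g) \<Rightarrow> 'g \<Rightarrow> 'g \<Rightarrow> 'g::ab_group_add" where
  "ad_D br D x u = br x u + br (D x) u"

definition apply_D_at :: "('g \<Rightarrow> 'g) \<Rightarrow> nat set \<Rightarrow> 'g list \<Rightarrow> 'g list" where
  "apply_D_at D S xs = map (\<lambda>i. if i \<in> S then D (xs ! i) else xs ! i) [0..<length xs]"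

definition T_op :: "('k::field \<Rightarrow> 'g::ab_group_add \<Rightarrow> 'g) \<Rightarrow> ('g \<Rightarrow> 'g) \<Rightarrow> ('g list \<Rightarrow> 'g) \<Rightarrow> 'g list \<Rightarrow> 'g" where
  "T_op scale D f xs = scale ((-1) ^ length xs)
      ((\<Sum>S\<in>{S. S \<subseteq> {..<length xs} \<and> S \<noteq> {}}. f (apply_D_at D S xs)) - D (f xs))"

definition delta_bar :: "('k::field \<Rightarrow> 'g::ab_group_add \<Rightarrow> 'g) \<Rightarrow> ('g \<Rightarrow> 'g \<Rightarrow> 'g) \<Rightarrow> ('g \<Rightarrow> 'g)
    \<Rightarrow> ('g list \<Rightarrow> 'g) \<times> ('g list \<Rightarrow> 'g) \<Rightarrow> ('g list \<Rightarrow> 'g) \<times> ('g list \<Rightarrow> 'g)" where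
  "delta_bar scale br D c =
     (ce_diff scale br (ad br) (fst c),
      \<lambda>xs. ce_diff scale br (ad_D br D) (snd c) xs + T_op scale D (fst c) xs)"

definition delta_bar1 :: "('k::field \<Rightarrow> 'g::ab_group_add \<Rightarrow> 'g) \<Rightarrow> ('g \<Rightarrow> 'g \<Rightarrow> 'g) \<Rightarrow> ('g \<Rightarrow> 'g)
    \<Rightarrow> ('g list \<Rightarrow> 'g) \<Rightarrow> ('g list \<Rightarrow> 'g) \<times> ('g list \<Rightarrow> 'g)" where
  "delta_bar1 scale br D f = (ce_diff scale br (ad br) f, T_op scale D f)"

end

theory Submission
  imports Defs
begin

text \<open>
  Write \<open>\<phi> = id + D\<close>. The identity defining a difference Lie algebra says exactly that \<open>\<phi>\<close>
  is a Lie algebra endomorphism, and \<open>ad\<^sub>D x = ad (\<phi> x)\<close>. Expanding by multiadditivity,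
  \<open>T f = (-1)\<^sup>n (f \<circ> (\<phi>, \<dots>, \<phi>) - \<phi> \<circ> f)\<close>. Both precomposition with the homomorphism \<open>\<phi>\<close>
  and postcomposition with \<open>\<phi>\<close> intertwine \<open>d\<^sub>a\<^sub>d\<close> with \<open>d\<^sub>a\<^sub>d\<^sub>D\<close>, while the sign of \<open>T\<close>
  alternates with the degree; hence \<open>d\<^sub>a\<^sub>d\<^sub>D T + T d\<^sub>a\<^sub>d = 0\<close>. Together with \<open>d \<circ> d = 0\<close>
  for every representation this gives \<open>\<delta> \<circ> \<delta> = 0\<close>.

  The identity \<open>d \<circ> d = 0\<close> is proved for the differential defined recursively by Cartan's
  formula, by induction from \<open>[L\<^sub>x, d] = 0\<close>, itself a consequence of \<open>[L\<^sub>x, L\<^sub>y] = L\<^bsub>[x,y]\<^esub>\<close>;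
  on multiadditive alternating cochains this differential agrees with the explicit formula.
\<close>

section \<open>Multiadditive and alternating functions of lists\<close>

definition multiadditive :: "('a::ab_group_add list \<Rightarrow> 'b::ab_group_add) \<Rightarrow> bool" where
  "multiadditive f \<longleftrightarrow> (\<forall>xs i. i < length xs \<longrightarrow> additive (\<lambda>a. f (xs[i := a])))"

definition alternating :: "('a list \<Rightarrow> 'b::zero) \<Rightarrow> bool" where
  "alternating f \<longleftrightarrow> (\<forall>xs i. Suc i < length xs \<longrightarrow> xs ! i = xs ! Suc i \<longrightarrow> f xs = 0)"

lemma multiadditiveD: "multiadditive f \<Longrightarrow> i < length xs \<Longrightarrow> additive (\<lambda>a. f (xs[i := a]))"
  unfolding multiadditive_def by blast

lemma multiadditive_update_add:
  "multiadditive f \<Longrightarrow> i < length xs \<Longrightarrow> f (xs[i := a + b]) = f (xs[i := a]) + f (xs[i := b])"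
  using additive.add[OF multiadditiveD] by blast

lemma multiadditive_update_diff:
  "multiadditive f \<Longrightarrow> i < length xs \<Longrightarrow> f (xs[i := a - b]) = f (xs[i := a]) - f (xs[i := b])"
  using additive.diff[OF multiadditiveD] by blast

lemma multiadditive_update_minus:
  "multiadditive f \<Longrightarrow> i < length xs \<Longrightarrow> f (xs[i := - a]) = - f (xs[i := a])"
  using additive.minus[OF multiadditiveD] by blast

lemma multiadditive_update_zero: "multiadditive f \<Longrightarrow> i < length xs \<Longrightarrow> f (xs[i := 0]) = 0"
  using additive.zero[OF multiadditiveD] by blast

lemma multiadditiveI:
  "(\<And>xs i a b. i < length xs \<Longrightarrow> f (xs[i := a + b]) = f (xs[i := a]) + f (xs[i := b]))
   \<Longrightarrow> multiadditive f"
  unfolding multiadditive_def additive_def by blast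

lemma alternatingD: "alternating f \<Longrightarrow> Suc i < length xs \<Longrightarrow> xs ! i = xs ! Suc i \<Longrightarrow> f xs = 0"
  unfolding alternating_def by blast

lemma multiadditive_Cons: "multiadditive f \<Longrightarrow> multiadditive (\<lambda>ys. f (x # ys))"
  by (rule multiadditiveI) (metis Suc_less_eq length_Cons list_update_code(3) multiadditive_update_add)

lemma alternating_Cons: "alternating f \<Longrightarrow> alternating (\<lambda>ys. f (x # ys))"
  unfolding alternating_def by (metis Suc_less_eq length_Cons nth_Cons_Suc)

lemma multiadditive_comp:
  "additive h \<Longrightarrow> multiadditive f \<Longrightarrow> multiadditive (\<lambda>xs. h (f xs))"
  by (simp add: multiadditive_update_add multiadditiveI additive.add)

lemma multiadditive_map:
  "additive \<phi> \<Longrightarrow> multiadditive f \<Longrightarrow> multiadditive (\<lambda>xs. f (map \<phi> xs))"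
  by (rule multiadditiveI) (simp add: map_update additive.add multiadditive_update_add)

lemma multiadditive_diff:
  "multiadditive f \<Longrightarrow> multiadditive g \<Longrightarrow> multiadditive (\<lambda>xs. f xs - g xs)"
  by (rule multiadditiveI) (simp add: multiadditive_update_add)

lemma alternating_comp: "h 0 = 0 \<Longrightarrow> alternating f \<Longrightarrow> alternating (\<lambda>xs. h (f xs))"
  unfolding alternating_def by simp

lemma alternating_map: "alternating f \<Longrightarrow> alternating (\<lambda>xs. f (map \<phi> xs))"
  unfolding alternating_def by simp

lemma alternating_diff:
  fixes f g :: "'a list \<Rightarrow> 'b::ab_group_add"
  shows "alternating f \<Longrightarrow> alternating g \<Longrightarrow> alternating (\<lambda>xs. f xs - g xs)"
  unfolding alternating_def by simp

lemma alternating_swap: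
  assumes "multiadditive f" "alternating f" "Suc i < length xs"
  shows "f (xs[i := b, Suc i := a]) = - f (xs[i := a, Suc i := b])"
proof -
  define g where "g u v = f (xs[i := u, Suc i := v])" for u v
  have g_add_left: "g (u + u') v = g u v + g u' v" for u u' v
    unfolding g_def list_update_swap[of i "Suc i", OF n_not_Suc_n]
    using assms by (simp add: multiadditive_update_add)
  have g_add_right: "g u (v + v') = g u v + g u v'" for u v v'
    unfolding g_def using assms by (simp add: multiadditive_update_add)
  have g_self: "g u u = 0" for u
    unfolding g_def using assms by (auto intro: alternatingD)
  have "0 = g (a + b) (a + b)" by (rule g_self[symmetric])
  also have "\<dots> = g a a + g a b + (g b a + g b b)" by (simp only: g_add_left g_add_right ac_simps)
  also have "\<dots> = g a b + g b a" by (simp add: g_self)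
  finally show ?thesis unfolding g_def by (simp add: eq_neg_iff_add_eq_0 add.commute)
qed

lemma alternating_swap_Cons:
  "multiadditive f \<Longrightarrow> alternating f \<Longrightarrow> f (a # b # xs) = - f (b # a # xs)"
  using alternating_swap[of f 0 "b # a # xs" a b] by simp

section \<open>Lie rings and Lie modules\<close>

locale lie_ring =
  fixes br :: "'g::ab_group_add \<Rightarrow> 'g \<Rightarrow> 'g"
  assumes br_add_left: "br (a + b) c = br a c + br b c"
    and br_add_right: "br a (b + c) = br a b + br a c"
    and br_self: "br a a = 0"
    and jacobi: "br x (br y z) + br y (br z x) + br z (br x y) = 0"
begin

lemma additive_br_right: "additive (br a)"
  by (simp add: additive_def br_add_right)

lemma br_antisym: "br a b = - br b a"
proof -
  have "0 = br (a + b) (a + b)" by (simp add: br_self)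
  also have "\<dots> = br a a + br a b + (br b a + br b b)" by (simp only: br_add_left br_add_right ac_simps)
  also have "\<dots> = br a b + br b a" by (simp add: br_self)
  finally show ?thesis by (simp add: eq_neg_iff_add_eq_0)
qed

lemma br_commutator: "br x (br y z) - br y (br x z) = br (br x y) z"
proof -
  have "br y (br z x) = - br y (br x z)"
    using br_antisym[of z x] additive.minus[OF additive_br_right] by simp
  moreover have "br z (br x y) = - br (br x y) z" by (rule br_antisym)
  moreover have "br x (br y z) = - (br y (br z x) + br z (br x y))"
    using jacobi[of x y z] by (metis add.assoc eq_neg_iff_add_eq_0)
  ultimately show ?thesis by simp
qed

end

locale lie_module = lie_ring br for br :: "'g::ab_group_add \<Rightarrow> 'g \<Rightarrow> 'g" +
  fixes rho :: "'g \<Rightarrow> 'm::ab_group_add \<Rightarrow> 'm"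
  assumes rho_add_left: "rho (a + b) v = rho a v + rho b v"
    and additive_rho: "additive (rho x)"
    and rho_commutator: "rho x (rho y v) - rho y (rho x v) = rho (br x y) v"

lemma (in lie_ring) lie_module_ad: "lie_module br (ad br)"
  by unfold_locales (simp_all add: ad_def additive_def br_add_left br_add_right br_commutator)

section \<open>The Chevalley--Eilenberg differential via Cartan's formula\<close>

definition lie_derivative ::
    "('g \<Rightarrow> 'g \<Rightarrow> 'g) \<Rightarrow> ('g \<Rightarrow> 'm \<Rightarrow> 'm) \<Rightarrow> 'g \<Rightarrow> ('g list \<Rightarrow> 'm) \<Rightarrow> 'g list \<Rightarrow> 'm::ab_group_add"
  where "lie_derivative br rho x f xs = rho x (f xs) - (\<Sum>j<length xs. f (xs[j := br x (xs ! j)]))"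

text \<open>Cartan's formula \<open>L\<^sub>x = \<iota>\<^sub>x d + d \<iota>\<^sub>x\<close>, with \<open>(\<iota>\<^sub>x f) ys = f (x # ys)\<close>, read as a
  recursive definition of the Chevalley--Eilenberg differential \<open>d\<close>.\<close>

primrec ce_diff_rec ::
    "('g \<Rightarrow> 'g \<Rightarrow> 'g) \<Rightarrow> ('g \<Rightarrow> 'm \<Rightarrow> 'm) \<Rightarrow> ('g list \<Rightarrow> 'm) \<Rightarrow> 'g list \<Rightarrow> 'm::ab_group_add"
  where
    "ce_diff_rec br rho f [] = 0"
  | "ce_diff_rec br rho f (x # xs) =
       lie_derivative br rho x f xs - ce_diff_rec br rho (\<lambda>ys. f (x # ys)) xs"

lemma lie_derivative_diff:
  assumes "additive (rho x)"
  shows "lie_derivative br rho x (\<lambda>ys. f ys - g ys) xs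
    = lie_derivative br rho x f xs - lie_derivative br rho x g xs"
  using assms by (simp add: lie_derivative_def additive.diff sum_subtractf algebra_simps)

lemma lie_derivative_Cons:
  "lie_derivative br rho x f (y # ys)
    = lie_derivative br rho x (\<lambda>zs. f (y # zs)) ys - f (br x y # ys)"
  unfolding lie_derivative_def length_Cons sum.lessThan_Suc_shift by (simp add: algebra_simps)

lemma ce_diff_rec_zero:
  "(\<And>x. additive (rho x)) \<Longrightarrow> ce_diff_rec br rho (\<lambda>ys. 0) xs = 0"
  by (induction xs) (simp_all add: lie_derivative_def additive.zero)

lemma ce_diff_rec_add:
  assumes "\<And>x. additive (rho x)"
  shows "ce_diff_rec br rho (\<lambda>ys. f ys + g ys) xs = ce_diff_rec br rho f xs + ce_diff_rec br rho g xs"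
proof (induction xs arbitrary: f g)
  case (Cons x xs)
  have "lie_derivative br rho x (\<lambda>ys. f ys + g ys) xs
      = lie_derivative br rho x f xs + lie_derivative br rho x g xs"
    using assms by (simp add: lie_derivative_def additive.add sum.distrib algebra_simps)
  then show ?case using Cons.IH[of "\<lambda>ys. f (x # ys)" "\<lambda>ys. g (x # ys)"] by simp
qed simp

lemma ce_diff_rec_diff:
  assumes "\<And>x. additive (rho x)"
  shows "ce_diff_rec br rho (\<lambda>ys. f ys - g ys) xs = ce_diff_rec br rho f xs - ce_diff_rec br rho g xs"
proof (induction xs arbitrary: f g)
  case (Cons x xs)
  then show ?case
    using Cons.IH[of "\<lambda>ys. f (x # ys)" "\<lambda>ys. g (x # ys)"] by (simp add: lie_derivative_diff assms)
qed simp

lemma ce_diff_rec_comp: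
  assumes "\<And>x u. rho' x (h u) = h (rho x u)" and "additive h"
  shows "ce_diff_rec br rho' (\<lambda>ys. h (f ys)) xs = h (ce_diff_rec br rho f xs)"
proof (induction xs arbitrary: f)
  case (Cons x xs)
  have "lie_derivative br rho' x (\<lambda>ys. h (f ys)) xs = h (lie_derivative br rho x f xs)"
    using assms by (simp add: lie_derivative_def additive.diff additive.sum)
  then show ?case using Cons.IH[of "\<lambda>ys. f (x # ys)"] assms(2) by (simp add: additive.diff)
qed (simp add: additive.zero[OF assms(2)])

lemma ce_diff_rec_map:
  assumes "\<And>x u. rho' x u = rho (\<phi> x) u" and "\<And>a b. br (\<phi> a) (\<phi> b) = \<phi> (br a b)"
  shows "ce_diff_rec br rho' (\<lambda>ys. f (map \<phi> ys)) xs = ce_diff_rec br rho f (map \<phi> xs)"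
proof (induction xs arbitrary: f)
  case (Cons x xs)
  have "lie_derivative br rho' x (\<lambda>ys. f (map \<phi> ys)) xs = lie_derivative br rho (\<phi> x) f (map \<phi> xs)"
    using assms by (simp add: lie_derivative_def map_update)
  then show ?case using Cons.IH[of "\<lambda>ys. f (\<phi> x # ys)"] by simp
qed simp

lemma update_update_nth:
  "j < length xs \<Longrightarrow> xs[i := c, j := h (xs[i := c] ! j)]
    = (if j = i then xs[i := h c] else xs[j := h (xs ! j), i := c])"
  by (auto simp: list_update_swap nth_list_update)

context lie_module
begin

lemma multiadditive_lie_derivative:
  assumes "multiadditive f"
  shows "multiadditive (lie_derivative br rho x f)"
proof (rule multiadditiveI)
  fix xs :: "'g list" and i a b
  assume i: "i < length xs"
  have "f (xs[i := a + b, j := br x (xs[i := a + b] ! j)])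
      = f (xs[i := a, j := br x (xs[i := a] ! j)]) + f (xs[i := b, j := br x (xs[i := b] ! j)])"
    if "j < length xs" for j
    using that i assms by (simp add: update_update_nth br_add_right multiadditive_update_add)
  moreover have "rho x (f (xs[i := a + b])) = rho x (f (xs[i := a])) + rho x (f (xs[i := b]))"
    using assms i by (simp add: multiadditive_update_add additive.add[OF additive_rho])
  ultimately show "lie_derivative br rho x f (xs[i := a + b])
      = lie_derivative br rho x f (xs[i := a]) + lie_derivative br rho x f (xs[i := b])"
    by (simp add: lie_derivative_def sum.distrib)
qed

lemma multiadditive_ce_diff_rec:
  "multiadditive f \<Longrightarrow> multiadditive (ce_diff_rec br rho f)"
proof (rule multiadditiveI)
  fix xs :: "'g list" and i a b
  show "multiadditive f \<Longrightarrow> i < length xs \<Longrightarrow>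
    ce_diff_rec br rho f (xs[i := a + b]) = ce_diff_rec br rho f (xs[i := a]) + ce_diff_rec br rho f (xs[i := b])"
  proof (induction xs arbitrary: f i)
    case (Cons y ys)
    show ?case
    proof (cases i)
      case 0
      have "lie_derivative br rho (a + b) f ys = lie_derivative br rho a f ys + lie_derivative br rho b f ys"
        using Cons.prems(1)
        by (simp add: lie_derivative_def rho_add_left br_add_left multiadditive_update_add sum.distrib)
      moreover have "f ((a + b) # zs) = f (a # zs) + f (b # zs)" for zs
        using multiadditive_update_add[OF Cons.prems(1), of 0 "y # zs"] by simp
      ultimately show ?thesis
        using 0 ce_diff_rec_add[where rho = rho, OF additive_rho] by simp
    next
      case (Suc k)
      then show ?thesis
        using Cons.prems multiadditive_lie_derivative[OF Cons.prems(1), of y]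
          Cons.IH[OF multiadditive_Cons[OF Cons.prems(1)], of k]
        by (simp add: multiadditive_update_add)
    qed
  qed simp
qed

lemma alternating_lie_derivative:
  assumes "multiadditive f" "alternating f"
  shows "alternating (lie_derivative br rho x f)"
  unfolding alternating_def
proof (intro allI impI)
  fix xs :: "'g list" and i
  assume i: "Suc i < length xs" and eq: "xs ! i = xs ! Suc i"
  define t where "t j = f (xs[j := br x (xs ! j)])" for j
  have "t j = 0" if "j < length xs" "j \<noteq> i" "j \<noteq> Suc i" for j
    unfolding t_def using assms(2) i eq that by (auto intro: alternatingD simp: nth_list_update)
  then have "(\<Sum>j<length xs. t j) = t i + t (Suc i)"
    using i by (subst sum.mono_neutral_right[where S = "{i, Suc i}"]) auto
  also have "\<dots> = 0"
  proof -
    have "xs[i := br x (xs ! i)] = xs[i := br x (xs ! i), Suc i := xs ! i]"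
      and "xs[Suc i := br x (xs ! i)] = xs[i := xs ! i, Suc i := br x (xs ! i)]"
      using eq by (metis list_update_id list_update_swap n_not_Suc_n)+
    then show ?thesis
      unfolding t_def using alternating_swap[OF assms i, of "br x (xs ! i)" "xs ! i"] eq by simp
  qed
  finally show "lie_derivative br rho x f xs = 0"
    using alternatingD[OF assms(2) i eq] additive.zero[OF additive_rho]
    by (simp add: lie_derivative_def t_def)
qed

lemma alternating_ce_diff_rec:
  "multiadditive f \<Longrightarrow> alternating f \<Longrightarrow> alternating (ce_diff_rec br rho f)"
  unfolding alternating_def[of "ce_diff_rec br rho f"]
proof (intro allI impI)
  fix xs :: "'g list" and i
  show "multiadditive f \<Longrightarrow> alternating f \<Longrightarrow> Suc i < length xs \<Longrightarrow> xs ! i = xs ! Suc i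
    \<Longrightarrow> ce_diff_rec br rho f xs = 0"
  proof (induction xs arbitrary: f i)
    case (Cons y ys)
    show ?case
    proof (cases i)
      case 0
      then obtain zs where ys: "ys = y # zs"
        using Cons.prems(3,4) by (cases ys) auto
      have "f (br y y # zs) = 0"
        using multiadditive_update_zero[OF Cons.prems(1), of 0 "y # zs"] by (simp add: br_self)
      then have "lie_derivative br rho y f (y # zs) = lie_derivative br rho y (\<lambda>ws. f (y # ws)) zs"
        by (simp add: lie_derivative_Cons)
      moreover have "(\<lambda>ws. f (y # y # ws)) = (\<lambda>ws. 0)"
        using alternatingD[OF Cons.prems(2), of 0] by force
      ultimately show ?thesis
        using ys ce_diff_rec_zero[OF additive_rho] by simp
    next
      case (Suc k)
      then show ?thesis
        using Cons.prems alternating_lie_derivative[OF Cons.prems(1,2), of y]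
          Cons.IH[OF multiadditive_Cons[OF Cons.prems(1)] alternating_Cons[OF Cons.prems(2)], of k]
        by (simp add: alternating_def)
    qed
  qed simp
qed

lemma sum_update_update_commutator:
  fixes zs :: "'g list"
  assumes "multiadditive f"
  defines "A x y k j \<equiv> f (zs[k := br x (zs ! k), j := br y (zs[k := br x (zs ! k)] ! j)])"
  shows "(\<Sum>k<length zs. \<Sum>j<length zs. A x y k j) - (\<Sum>k<length zs. \<Sum>j<length zs. A y x k j)
    = - (\<Sum>k<length zs. f (zs[k := br (br x y) (zs ! k)]))"
proof -
  let ?n = "length zs"
  have diagonal: "A x y k j - A y x j k = (if j = k then - f (zs[k := br (br x y) (zs ! k)]) else 0)"
    if "k < ?n" "j < ?n" for k j
  proof (cases "j = k")
    case True
    have "A x y k j - A y x j k = f (zs[k := br y (br x (zs ! k)) - br x (br y (zs ! k))])"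
      unfolding A_def using True that assms by (simp add: multiadditive_update_diff)
    also have "br y (br x (zs ! k)) - br x (br y (zs ! k)) = - br (br x y) (zs ! k)"
      by (metis br_commutator minus_diff_eq)
    finally show ?thesis using True that assms by (simp add: multiadditive_update_minus)
  qed (simp add: A_def that list_update_swap)
  have "(\<Sum>k<?n. \<Sum>j<?n. A x y k j) - (\<Sum>k<?n. \<Sum>j<?n. A y x k j)
      = (\<Sum>k<?n. \<Sum>j<?n. A x y k j - A y x j k)"
    by (subst sum.swap[of _ _ "{..<?n}"]) (simp add: sum_subtractf)
  also have "\<dots> = (\<Sum>k<?n. \<Sum>j<?n. if j = k then - f (zs[k := br (br x y) (zs ! k)]) else 0)"
    by (intro sum.cong refl) (simp add: diagonal)
  also have "\<dots> = - (\<Sum>k<?n. f (zs[k := br (br x y) (zs ! k)]))"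
    by (simp add: sum_negf)
  finally show ?thesis .
qed

lemma lie_derivative_commutator:
  assumes "multiadditive f"
  shows "lie_derivative br rho x (lie_derivative br rho y f) zs
      - lie_derivative br rho y (lie_derivative br rho x f) zs
    = lie_derivative br rho (br x y) f zs"
proof -
  have expand: "lie_derivative br rho x (lie_derivative br rho y f) zs
    = rho x (rho y (f zs)) - (\<Sum>j<length zs. rho x (f (zs[j := br y (zs ! j)])))
      - (\<Sum>k<length zs. rho y (f (zs[k := br x (zs ! k)])))
      + (\<Sum>k<length zs. \<Sum>j<length zs. f (zs[k := br x (zs ! k), j := br y (zs[k := br x (zs ! k)] ! j)]))"
    for x y
    by (simp add: lie_derivative_def additive.diff[OF additive_rho] additive.sum[OF additive_rho]
        sum_subtractf algebra_simps)
  show ?thesis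
    unfolding expand
    using sum_update_update_commutator[OF assms, of zs x y] rho_commutator[of x y "f zs"]
    by (simp add: lie_derivative_def algebra_simps)
qed

lemma lie_derivative_ce_diff_rec:
  "multiadditive f \<Longrightarrow>
    lie_derivative br rho x (ce_diff_rec br rho f) zs = ce_diff_rec br rho (lie_derivative br rho x f) zs"
proof (induction zs arbitrary: f)
  case Nil
  then show ?case by (simp add: lie_derivative_def additive.zero[OF additive_rho])
next
  case (Cons y ys)
  let ?L = "lie_derivative br rho" and ?d = "ce_diff_rec br rho"
  define g where "g = (\<lambda>zs. f (y # zs))"
  define h where "h = (\<lambda>zs. f (br x y # zs))"
  have "?L x (?d f) (y # ys) = ?L x (\<lambda>zs. ?L y f zs - ?d g zs) ys - (?L (br x y) f ys - ?d h ys)"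
    by (simp add: lie_derivative_Cons g_def h_def)
  also have "\<dots> = ?L x (?L y f) ys - ?L x (?d g) ys - ?L (br x y) f ys + ?d h ys"
    by (simp add: lie_derivative_diff[OF additive_rho])
  also have "\<dots> = ?L y (?L x f) ys - ?L x (?d g) ys + ?d h ys"
    using lie_derivative_commutator[OF Cons.prems, of x y ys] by (simp add: algebra_simps)
  also have "?L x (?d g) ys = ?d (?L x g) ys"
    using Cons.IH[OF multiadditive_Cons[OF Cons.prems]] by (simp add: g_def)
  also have "?L y (?L x f) ys - ?d (?L x g) ys + ?d h ys = ?d (?L x f) (y # ys)"
    by (simp add: lie_derivative_Cons[of _ _ x f] g_def h_def ce_diff_rec_diff[OF additive_rho])
  finally show ?case .
qed

theorem ce_diff_rec_squared:
  "multiadditive f \<Longrightarrow> ce_diff_rec br rho (ce_diff_rec br rho f) xs = 0"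
proof (induction xs arbitrary: f)
  case (Cons x xs)
  then show ?case
    using lie_derivative_ce_diff_rec[OF Cons.prems] Cons.IH[OF multiadditive_Cons[OF Cons.prems]]
    by (simp add: ce_diff_rec_diff[OF additive_rho])
qed simp

end

section \<open>Comparison with the explicit differential\<close>

lemma del_nth_Cons_0 [simp]: "del_nth 0 (x # xs) = xs"
  by (simp add: del_nth_def)

lemma del_nth_Cons_Suc [simp]: "del_nth (Suc i) (x # xs) = x # del_nth i xs"
  by (simp add: del_nth_def)

lemma length_del_nth [simp]: "i < length xs \<Longrightarrow> length (del_nth i xs) = length xs - 1"
  by (simp add: del_nth_def)

context vector_space
begin

lemma alternating_del_nth:
  "multiadditive f \<Longrightarrow> alternating f \<Longrightarrow> j < length xs
    \<Longrightarrow> f (a # del_nth j xs) = scale ((-1) ^ j) (f (xs[j := a]))"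
proof (induction j arbitrary: xs f)
  case 0
  then show ?case by (cases xs) auto
next
  case (Suc k)
  then obtain y ys where xs: "xs = y # ys" by (cases xs) auto
  have "f (a # del_nth (Suc k) xs) = - f (y # a # del_nth k ys)"
    unfolding xs del_nth_Cons_Suc by (rule alternating_swap_Cons[OF Suc.prems(1,2)])
  also have "f (y # a # del_nth k ys) = scale ((-1) ^ k) (f (y # ys[k := a]))"
    using Suc.IH[OF multiadditive_Cons[OF Suc.prems(1)] alternating_Cons[OF Suc.prems(2)]] Suc.prems(3) xs
    by simp
  finally show ?case unfolding xs by simp
qed

lemma ce_action_sum_Cons:
  "(\<Sum>i<length (x # xs). scale ((-1) ^ i) (rho ((x # xs) ! i) (f (del_nth i (x # xs)))))
    = rho x (f xs) - (\<Sum>i<length xs. scale ((-1) ^ i) (rho (xs ! i) (f (x # del_nth i xs))))"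
  unfolding length_Cons sum.lessThan_Suc_shift by (simp add: sum_negf)

lemma ce_bracket_sum_Cons:
  assumes "multiadditive f" "alternating f"
  shows "(\<Sum>i<length (x # xs). \<Sum>j\<in>{Suc i..<length (x # xs)}.
      scale ((-1) ^ (i + j)) (f (br ((x # xs) ! i) ((x # xs) ! j) # del_nth i (del_nth j (x # xs)))))
    = - (\<Sum>j<length xs. f (xs[j := br x (xs ! j)]))
      - (\<Sum>i<length xs. \<Sum>j\<in>{Suc i..<length xs}.
          scale ((-1) ^ (i + j)) (f (x # br (xs ! i) (xs ! j) # del_nth i (del_nth j xs))))"
proof -
  have first_row: "(\<Sum>j\<in>{Suc 0..<length (x # xs)}. scale ((-1) ^ (0 + j))
        (f (br ((x # xs) ! 0) ((x # xs) ! j) # del_nth 0 (del_nth j (x # xs)))))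
    = - (\<Sum>j<length xs. f (xs[j := br x (xs ! j)]))"
    unfolding length_Cons sum.shift_bounds_Suc_ivl
    by (simp add: atLeast0LessThan alternating_del_nth[OF assms] sum_negf)
  have swap: "f (c # x # r) = - f (x # c # r)" for c r
    by (rule alternating_swap_Cons[OF assms])
  have other_rows: "(\<Sum>i<length xs. \<Sum>j\<in>{Suc (Suc i)..<length (x # xs)}. scale ((-1) ^ (Suc i + j))
        (f (br ((x # xs) ! Suc i) ((x # xs) ! j) # del_nth (Suc i) (del_nth j (x # xs)))))
    = - (\<Sum>i<length xs. \<Sum>j\<in>{Suc i..<length xs}.
          scale ((-1) ^ (i + j)) (f (x # br (xs ! i) (xs ! j) # del_nth i (del_nth j xs))))"
    unfolding length_Cons sum.shift_bounds_Suc_ivl by (simp add: swap sum_negf)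
  show ?thesis
    using first_row other_rows unfolding length_Cons[of x xs] sum.lessThan_Suc_shift[where n = "length xs"]
    by simp
qed

lemma ce_diff_Cons:
  assumes "multiadditive f" "alternating f"
  shows "ce_diff scale br rho f (x # xs)
    = lie_derivative br rho x f xs - ce_diff scale br rho (\<lambda>ys. f (x # ys)) xs"
  unfolding ce_diff_def[of scale br rho f] ce_action_sum_Cons ce_bracket_sum_Cons[OF assms]
  by (simp add: ce_diff_def lie_derivative_def algebra_simps)

lemma ce_diff_eq_ce_diff_rec:
  "multiadditive f \<Longrightarrow> alternating f \<Longrightarrow> ce_diff scale br rho f xs = ce_diff_rec br rho f xs"
proof (induction xs arbitrary: f)
  case Nil
  then show ?case by (simp add: ce_diff_def)
next
  case (Cons x xs)
  then show ?case
    using ce_diff_Cons[OF Cons.prems]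
      Cons.IH[OF multiadditive_Cons[OF Cons.prems(1)] alternating_Cons[OF Cons.prems(2)]]
    by simp
qed

lemma ce_diff_add:
  assumes "\<And>x. additive (rho x)"
  shows "ce_diff scale br rho (\<lambda>zs. f zs + g zs) xs = ce_diff scale br rho f xs + ce_diff scale br rho g xs"
  using assms by (simp add: ce_diff_def additive.add scale_right_distrib sum.distrib algebra_simps)

end

lemma ce_diff_cong:
  assumes "\<And>zs. Suc (length zs) = length xs \<Longrightarrow> f zs = g zs"
  shows "ce_diff scale br rho f xs = ce_diff scale br rho g xs"
proof -
  have "f (del_nth i xs) = g (del_nth i xs)" if "i < length xs" for i
    using assms[of "del_nth i xs"] that by simp
  moreover have "f (br (xs ! i) (xs ! j) # del_nth i (del_nth j xs))
      = g (br (xs ! i) (xs ! j) # del_nth i (del_nth j xs))"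
    if "i < length xs" "j \<in> {Suc i..<length xs}" for i j
  proof (rule assms)
    have "i < length (del_nth j xs)" using that by auto
    with that show "Suc (length (br (xs ! i) (xs ! j) # del_nth i (del_nth j xs))) = length xs"
      by simp
  qed
  ultimately show ?thesis
    unfolding ce_diff_def by (intro arg_cong2[where f = "(+)"] sum.cong refl) simp_all
qed

section \<open>The operator T\<close>

definition twist :: "('a \<Rightarrow> 'a) \<Rightarrow> ('a list \<Rightarrow> 'a) \<Rightarrow> 'a list \<Rightarrow> 'a::ab_group_add" where
  "twist \<phi> f xs = f (map \<phi> xs) - \<phi> (f xs)"

lemma multiadditive_twist:
  assumes "additive \<phi>" "multiadditive f"
  shows "multiadditive (twist \<phi> f)"
  unfolding twist_def
  by (intro multiadditive_diff multiadditive_map[OF assms] multiadditive_comp[OF assms])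

lemma alternating_twist: "additive \<phi> \<Longrightarrow> alternating f \<Longrightarrow> alternating (twist \<phi> f)"
  unfolding twist_def
  by (intro alternating_diff alternating_map alternating_comp[where h = \<phi>]) (simp_all add: additive.zero)

lemma ce_diff_rec_twist:
  assumes "additive \<phi>" "\<And>x. additive (rho x)"
    and "\<And>x u. rho' x u = rho (\<phi> x) u" "\<And>a b. br (\<phi> a) (\<phi> b) = \<phi> (br a b)"
    and "\<And>x u. rho (\<phi> x) (\<phi> u) = \<phi> (rho x u)"
  shows "ce_diff_rec br rho' (twist \<phi> f) xs = twist \<phi> (ce_diff_rec br rho f) xs"
proof -
  have "additive (rho' x)" for x
    using assms(2,3) by (simp add: additive_def)
  then have "ce_diff_rec br rho' (twist \<phi> f) xs
      = ce_diff_rec br rho' (\<lambda>ys. f (map \<phi> ys)) xs - ce_diff_rec br rho' (\<lambda>ys. \<phi> (f ys)) xs"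
    unfolding twist_def by (rule ce_diff_rec_diff)
  also have "\<dots> = twist \<phi> (ce_diff_rec br rho f) xs"
    unfolding twist_def using assms by (simp add: ce_diff_rec_map ce_diff_rec_comp)
  finally show ?thesis .
qed

lemma T_op_cong:
  "(\<And>zs. length zs = length xs \<Longrightarrow> f zs = g zs) \<Longrightarrow> T_op scale D f xs = T_op scale D g xs"
  by (simp add: T_op_def apply_D_at_def)

lemma apply_D_at_empty [simp]: "apply_D_at D {} xs = xs"
  by (simp add: apply_D_at_def map_nth)

lemma apply_D_at_all: "apply_D_at D {..<length xs} xs = map D xs"
  by (intro nth_equalityI) (simp_all add: apply_D_at_def)

lemma apply_D_at_update:
  "k < length xs \<Longrightarrow> k \<notin> S \<Longrightarrow> apply_D_at D S (xs[k := v]) = (apply_D_at D S xs)[k := v]"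
  by (intro nth_equalityI) (auto simp: apply_D_at_def nth_list_update)

lemma apply_D_at_insert:
  "k < length xs \<Longrightarrow> apply_D_at D (insert k S) xs = (apply_D_at D S xs)[k := D (xs ! k)]"
  by (intro nth_equalityI) (auto simp: apply_D_at_def nth_list_update)

lemma nth_apply_D_at_notin: "k < length xs \<Longrightarrow> k \<notin> S \<Longrightarrow> apply_D_at D S xs ! k = xs ! k"
  by (simp add: apply_D_at_def)

lemma sum_Pow_apply_D_at:
  assumes "multiadditive g" "k \<le> length xs"
  shows "(\<Sum>S\<in>Pow {..<k}. g (apply_D_at D S xs)) = g (apply_D_at (\<lambda>x. x + D x) {..<k} xs)"
  using assms(2)
proof (induction k arbitrary: xs)
  case (Suc k)
  let ?\<phi> = "\<lambda>x. x + D x"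
  define ys where "ys = apply_D_at ?\<phi> {..<k} xs"
  have k: "k < length xs" and k': "k < length ys" using Suc.prems by (simp_all add: ys_def apply_D_at_def)
  have inj: "inj_on (insert k) (Pow {..<k})"
    by (rule inj_onI) (metis PowD insert_ident lessThan_iff less_irrefl subset_iff)
  have "(\<Sum>S\<in>Pow {..<Suc k}. g (apply_D_at D S xs))
      = (\<Sum>S\<in>Pow {..<k}. g (apply_D_at D S xs)) + (\<Sum>S\<in>Pow {..<k}. g (apply_D_at D (insert k S) xs))"
    unfolding lessThan_Suc Pow_insert
    by (subst sum.union_disjoint) (auto simp: sum.reindex[OF inj])
  also have "(\<Sum>S\<in>Pow {..<k}. g (apply_D_at D (insert k S) xs))
      = (\<Sum>S\<in>Pow {..<k}. g (apply_D_at D S (xs[k := D (xs ! k)])))"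
  proof (intro sum.cong refl)
    fix S assume "S \<in> Pow {..<k}"
    then have "k \<notin> S" by auto
    with k show "g (apply_D_at D (insert k S) xs) = g (apply_D_at D S (xs[k := D (xs ! k)]))"
      by (simp add: apply_D_at_insert apply_D_at_update)
  qed
  also have "\<dots> = g (ys[k := D (xs ! k)])"
    using Suc k by (simp add: ys_def apply_D_at_update)
  also have "(\<Sum>S\<in>Pow {..<k}. g (apply_D_at D S xs)) = g (ys[k := xs ! k])"
  proof -
    have "ys ! k = xs ! k" unfolding ys_def using k by (simp add: nth_apply_D_at_notin)
    then show ?thesis using Suc.IH[of xs] k by (metis less_imp_le list_update_id ys_def)
  qed
  also have "g (ys[k := xs ! k]) + g (ys[k := D (xs ! k)]) = g (apply_D_at ?\<phi> {..<Suc k} xs)"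
    using multiadditive_update_add[OF assms(1) k'] k by (simp add: ys_def lessThan_Suc apply_D_at_insert)
  finally show ?case .
qed simp

lemma T_op_eq_twist:
  assumes "multiadditive g" "additive D"
  shows "T_op scale D g xs = scale ((-1) ^ length xs) (twist (\<lambda>x. x + D x) g xs)"
proof -
  have "{S. S \<subseteq> {..<length xs} \<and> S \<noteq> {}} = Pow {..<length xs} - {{}}" by auto
  then have sum_eq: "(\<Sum>S\<in>{S. S \<subseteq> {..<length xs} \<and> S \<noteq> {}}. g (apply_D_at D S xs))
      = g (map (\<lambda>x. x + D x) xs) - g xs"
    using sum_Pow_apply_D_at[OF assms(1) order_refl]
    by (simp add: sum_diff1 apply_D_at_all)
  show ?thesis
    unfolding T_op_def sum_eq twist_def diff_diff_eq ..
qed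

text \<open>\<open>alt_multilinear scale n f\<close> says nothing about \<open>f\<close> off lists of length \<open>n\<close>; setting it
  to zero there makes it multiadditive and alternating on all lists.\<close>

definition restrict_arity :: "nat \<Rightarrow> ('a list \<Rightarrow> 'b::zero) \<Rightarrow> 'a list \<Rightarrow> 'b" where
  "restrict_arity n f xs = (if length xs = n then f xs else 0)"

lemma multiadditive_restrict_arity:
  fixes f :: "'a::ab_group_add list \<Rightarrow> 'a"
  assumes "alt_multilinear scale n f"
  shows "multiadditive (restrict_arity n f)"
proof (rule multiadditiveI)
  fix xs :: "'a list" and i a b
  assume i: "i < length xs"
  show "restrict_arity n f (xs[i := a + b]) = restrict_arity n f (xs[i := a]) + restrict_arity n f (xs[i := b])"
  proof (cases "length xs = n")
    case True
    then have "Vector_Spaces.linear scale scale (\<lambda>a. f (xs[i := a]))"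
      using assms i by (simp add: alt_multilinear_def)
    then show ?thesis using True by (simp add: restrict_arity_def linear_iff)
  qed (simp add: restrict_arity_def)
qed

lemma alternating_restrict_arity:
  "alt_multilinear scale n f \<Longrightarrow> alternating (restrict_arity n f)"
  unfolding alternating_def restrict_arity_def alt_multilinear_def by (metis lessI)

lemma ce_diff_restrict_arity:
  assumes "vector_space scale" "alt_multilinear scale n f" "length xs = Suc n"
  shows "ce_diff scale br rho f xs = ce_diff_rec br rho (restrict_arity n f) xs"
proof -
  have "ce_diff scale br rho f xs = ce_diff scale br rho (restrict_arity n f) xs"
    by (rule ce_diff_cong) (simp add: assms(3) restrict_arity_def)
  also have "\<dots> = ce_diff_rec br rho (restrict_arity n f) xs"
    using assms(1) multiadditive_restrict_arity[OF assms(2)] alternating_restrict_arity[OF assms(2)]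
    by (rule vector_space.ce_diff_eq_ce_diff_rec)
  finally show ?thesis .
qed

theorem ce_diff_squared:
  assumes "vector_space scale" "lie_module br rho" "alt_multilinear scale n f" "length xs = n + 2"
  shows "ce_diff scale br rho (ce_diff scale br rho f) xs = 0"
proof -
  interpret lie_module br rho by fact
  let ?F = "restrict_arity n f"
  have F: "multiadditive ?F" "alternating ?F"
    using assms(3) by (rule multiadditive_restrict_arity alternating_restrict_arity)+
  have "ce_diff scale br rho (ce_diff scale br rho f) xs = ce_diff scale br rho (ce_diff_rec br rho ?F) xs"
    using assms(1,3,4) by (intro ce_diff_cong) (simp add: ce_diff_restrict_arity)
  also have "\<dots> = ce_diff_rec br rho (ce_diff_rec br rho ?F) xs"
    using assms(1) multiadditive_ce_diff_rec[OF F(1)] alternating_ce_diff_rec[OF F]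
    by (rule vector_space.ce_diff_eq_ce_diff_rec)
  also have "\<dots> = 0"
    using F(1) by (rule ce_diff_rec_squared)
  finally show ?thesis .
qed

section \<open>Difference Lie algebras\<close>

context
  fixes scale :: "'k::field \<Rightarrow> 'g::ab_group_add \<Rightarrow> 'g" and br :: "'g \<Rightarrow> 'g \<Rightarrow> 'g" and D :: "'g \<Rightarrow> 'g"
  assumes difference: "difference_lie_algebra scale br D"
begin

lemma difference_vector_space: "vector_space scale"
  using difference by (simp add: difference_lie_algebra_def lie_algebra_def)

lemma br_scale_right: "br x (scale c u) = scale c (br x u)"
  using difference by (simp add: difference_lie_algebra_def lie_algebra_def linear_iff)

lemma D_add: "D (u + v) = D u + D v"
  using difference by (simp add: difference_lie_algebra_def lie_algebra_def linear_iff)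

lemma additive_D: "additive D"
  by (simp add: additive_def D_add)

lemma additive_plus_D: "additive (\<lambda>x. x + D x)"
  by (simp add: additive_def D_add)

lemma difference_lie_ring: "lie_ring br"
  using difference unfolding difference_lie_algebra_def lie_algebra_def linear_iff
  by unfold_locales auto

interpretation lie_ring br
  by (rule difference_lie_ring)

lemma br_plus_D: "br (a + D a) (b + D b) = br a b + D (br a b)"
proof -
  have "br (a + D a) (b + D b) = br a b + br a (D b) + (br (D a) b + br (D a) (D b))"
    by (simp add: br_add_left br_add_right)
  also have "\<dots> = br a b + (br a (D b) - br b (D a) + br (D a) (D b))"
    by (simp add: br_antisym[of "D a" b])
  also have "\<dots> = br a b + D (br a b)"
    using difference by (simp add: difference_lie_algebra_def)
  finally show ?thesis .
qed

lemma ad_D_eq: "ad_D br D x u = br (x + D x) u"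
  by (simp add: ad_D_def br_add_left)

lemma lie_module_ad_D: "lie_module br (ad_D br D)"
proof (intro lie_module.intro lie_module_axioms.intro difference_lie_ring)
  show "ad_D br D (a + b) v = ad_D br D a v + ad_D br D b v" for a b v
    by (simp add: ad_D_def br_add_left D_add)
  show "additive (ad_D br D x)" for x
    by (simp add: additive_def ad_D_def br_add_right)
  show "ad_D br D x (ad_D br D y v) - ad_D br D y (ad_D br D x v) = ad_D br D (br x y) v" for x y v
    by (simp only: ad_D_eq br_commutator br_plus_D)
qed

lemma ce_diff_rec_ad_D_twist:
  "ce_diff_rec br (ad_D br D) (twist (\<lambda>x. x + D x) F) xs
    = twist (\<lambda>x. x + D x) (ce_diff_rec br (ad br) F) xs"
  using additive_plus_D lie_module.additive_rho[OF lie_module_ad]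
  by (rule ce_diff_rec_twist) (simp_all add: ad_def ad_D_eq br_plus_D)

lemma T_op_restrict_arity:
  assumes "alt_multilinear scale n f" "length zs = n"
  shows "T_op scale D f zs = scale ((-1) ^ n) (twist (\<lambda>x. x + D x) (restrict_arity n f) zs)"
proof -
  have "T_op scale D f zs = T_op scale D (restrict_arity n f) zs"
    by (rule T_op_cong) (simp add: assms(2) restrict_arity_def)
  also have "\<dots> = scale ((-1) ^ n) (twist (\<lambda>x. x + D x) (restrict_arity n f) zs)"
    using multiadditive_restrict_arity[OF assms(1)] additive_D assms(2) by (simp add: T_op_eq_twist)
  finally show ?thesis .
qed

theorem ce_diff_T_op:
  assumes f: "alt_multilinear scale n f" and ys: "length ys = Suc n"
  shows "ce_diff scale br (ad_D br D) (T_op scale D f) ys + T_op scale D (ce_diff scale br (ad br) f) ys = 0"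
proof -
  interpret vector_space scale by (rule difference_vector_space)
  interpret ad: lie_module br "ad br" by (rule lie_module_ad)
  define \<phi> where "\<phi> = (\<lambda>x. x + D x)"
  define F where "F = restrict_arity n f"
  define c where "c = (-1::'k) ^ n"
  have F: "multiadditive F" "alternating F"
    unfolding F_def using f by (rule multiadditive_restrict_arity alternating_restrict_arity)+
  have additive_scale: "additive (scale c)"
    by (simp add: additive_def scale_right_distrib)
  have "ce_diff scale br (ad_D br D) (T_op scale D f) ys
      = ce_diff scale br (ad_D br D) (\<lambda>xs. scale c (twist \<phi> F xs)) ys"
    using ys by (intro ce_diff_cong) (simp add: T_op_restrict_arity[OF f] F_def c_def \<phi>_def)
  also have "\<dots> = ce_diff_rec br (ad_D br D) (\<lambda>xs. scale c (twist \<phi> F xs)) ys"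
    using multiadditive_comp[OF additive_scale multiadditive_twist[OF _ F(1)]]
      alternating_comp[where h = "scale c", OF scale_zero_right alternating_twist[OF _ F(2)]]
    by (rule ce_diff_eq_ce_diff_rec) (simp_all add: \<phi>_def additive_plus_D)
  also have "\<dots> = scale c (ce_diff_rec br (ad_D br D) (twist \<phi> F) ys)"
    using additive_scale by (intro ce_diff_rec_comp) (simp_all add: ad_D_eq br_scale_right)
  also have "\<dots> = scale c (twist \<phi> (ce_diff_rec br (ad br) F) ys)"
    by (simp add: ce_diff_rec_ad_D_twist \<phi>_def)
  finally have "ce_diff scale br (ad_D br D) (T_op scale D f) ys
      = scale c (twist \<phi> (ce_diff_rec br (ad br) F) ys)" .
  moreover have "T_op scale D (ce_diff scale br (ad br) f) ys = T_op scale D (ce_diff_rec br (ad br) F) ys"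
    using ys by (intro T_op_cong) (simp add: ce_diff_restrict_arity[OF difference_vector_space f] F_def)
  moreover have "\<dots> = scale (- c) (twist \<phi> (ce_diff_rec br (ad br) F) ys)"
    using ys ad.multiadditive_ce_diff_rec[OF F(1)] additive_D
    by (simp add: T_op_eq_twist c_def \<phi>_def)
  ultimately show ?thesis by simp
qed

end

theorem theorem4p1:
  fixes scale :: "'k::field \<Rightarrow> 'g::ab_group_add \<Rightarrow> 'g"
    and br :: "'g \<Rightarrow> 'g \<Rightarrow> 'g" and D :: "'g \<Rightarrow> 'g"
  assumes "difference_lie_algebra scale br D"
  shows "(\<forall>f. alt_multilinear scale 1 f \<longrightarrow>
            (\<forall>xs. length xs = 3 \<longrightarrow> fst (delta_bar scale br D (delta_bar1 scale br D f)) xs = 0) \<and>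
            (\<forall>ys. length ys = 2 \<longrightarrow> snd (delta_bar scale br D (delta_bar1 scale br D f)) ys = 0))
       \<and> (\<forall>n f \<theta>. n \<ge> 2 \<longrightarrow> alt_multilinear scale n f \<longrightarrow> alt_multilinear scale (n - 1) \<theta> \<longrightarrow>
            (\<forall>xs. length xs = n + 2 \<longrightarrow> fst (delta_bar scale br D (delta_bar scale br D (f, \<theta>))) xs = 0) \<and>
            (\<forall>ys. length ys = n + 1 \<longrightarrow> snd (delta_bar scale br D (delta_bar scale br D (f, \<theta>))) ys = 0))"
proof -
  note vs = difference_vector_space[OF assms]
  note squared_ad = ce_diff_squared[OF vs lie_ring.lie_module_ad[OF difference_lie_ring[OF assms]]]
  note squared_ad_D = ce_diff_squared[OF vs lie_module_ad_D[OF assms]]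
  note T_op = ce_diff_T_op[OF assms]
  have additive_ad_D: "additive (ad_D br D x)" for x
    using lie_module_ad_D[OF assms] by (rule lie_module.additive_rho)
  show ?thesis
  proof (intro conjI allI impI)
    fix f n \<theta> and ys :: "'g list"
    assume n: "n \<ge> 2" and f: "alt_multilinear scale n f" and \<theta>: "alt_multilinear scale (n - 1) \<theta>"
      and ys: "length ys = n + 1"
    have "snd (delta_bar scale br D (delta_bar scale br D (f, \<theta>))) ys
      = ce_diff scale br (ad_D br D) (ce_diff scale br (ad_D br D) \<theta>) ys
        + (ce_diff scale br (ad_D br D) (T_op scale D f) ys + T_op scale D (ce_diff scale br (ad br) f) ys)"
      by (simp add: delta_bar_def vector_space.ce_diff_add[OF vs additive_ad_D] add.assoc)
    then show "snd (delta_bar scale br D (delta_bar scale br D (f, \<theta>))) ys = 0"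
      using squared_ad_D[OF \<theta>] T_op[OF f] n ys by simp
  qed (simp_all add: delta_bar_def delta_bar1_def squared_ad T_op)
qed

end
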